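(* There exists an NWBTS$(5;b)$ for every $b\ge 0$ with $b\equiv 3,4,6,7\pmod{10}$, and an NWBTS$(11;b)$ for every $b\ge0$ with $b\equiv 18,19,36,37\pmod{55}$.
   Context: A triple system TS$(v;b)$ is a pair $(V,\mathcal F)$, $V$ a set of $v\ge3$ points, $\mathcal F$ a multiset of $b$ 3-subsets (blocks). $\lambda_{x_1,\dots,x_j}$ is the number of blocks containing $\{x_1,\dots,x_j\}$; $j$-balanced means $|\lambda_{x_1,\dots,x_j}-\lambda_{y_1,\dots,y_j}|\le1$ for all $j$-subsets. Associated pair $(\lambda,\varepsilon)$ of $(v,b)$: integers with $3b=\lambda\binom v2+\varepsilon$, $-v/2<\varepsilon<v/2$. (C1): $v\equiv 2\pmod 3$ and $b\in\{\lfloor \lambda v(v-1)/6\rfloor,\lceil \lambda v(v-1)/6\rceil\}$ for an integer $\lambda$ with $\lambda\equiv1,2\pmod 3$ if $v\equiv5\pmod6$ and $\lambda\equiv 2,4\pmod 6$ if $v\equiv2\pmod 6$ ($\lambda$ is that of the associated pair; $\varepsilon\in\{\pm1,\pm2\}$). Defect graph (when all $\lambda_{x,y}\in\{\lambda-1,\lambda,\lambda+1\}$): graph on $V$ with edges the pairs with $\lambda_{x,y}=\lambda+1$ (label $+1$) or $\lambda-1$ (label $-1$); isomorphisms preserve labels. $G_1$: triangle, two $+1$ edges and one $-1$; $G_{-1}$: triangle, one $+1$ and two $-1$; $G_2$: 4-cycle, three $+1$ and one $-1$; $G_{-2}$: 4-cycle, one $+1$ and three $-1$. Under (C1), an NWBTS$(v;b)$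 is a 3-balanced TS$(v;b)$ with all $\lambda_{x,y}\in\{\lambda-1,\lambda,\lambda+1\}$ and defect graph isomorphic to $G_\varepsilon$. (The values of $b$ listed are exactly those for which $(5,b)$, resp. $(11,b)$, satisfies (C1).) *)

theory Defs
  imports Complex_Main "HOL-Library.Multiset"
begin

definition TS :: "nat \<Rightarrow> nat \<Rightarrow> 'a set \<Rightarrow> 'a set multiset \<Rightarrow> bool" where
  "TS v b V F \<longleftrightarrow> finite V \<and> card V = v \<and> v \<ge> 3 \<and> size F = b \<and>
     (\<forall>B\<in>#F. B \<subseteq> V \<and> card B = 3)"

definition lam :: "'a set multiset \<Rightarrow> 'a set \<Rightarrow> nat" where
  "lam F S = size (filter_mset (\<lambda>B. S \<subseteq> B) F)"

definition balanced :: "nat \<Rightarrow> 'a set \<Rightarrow> 'a set multiset \<Rightarrow> bool" where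
  "balanced j V F \<longleftrightarrow> (\<forall>S T. S \<subseteq> V \<and> T \<subseteq> V \<and> card S = j \<and> card T = j \<longrightarrow>
      \<bar>int (lam F S) - int (lam F T)\<bar> \<le> 1)"

definition assoc_pair :: "nat \<Rightarrow> nat \<Rightarrow> int \<Rightarrow> int \<Rightarrow> bool" where
  "assoc_pair v b l e \<longleftrightarrow> int (3 * b) = l * int (v choose 2) + e \<and>
     - int v < 2 * e \<and> 2 * e < int v"

definition C1 :: "nat \<Rightarrow> nat \<Rightarrow> bool" where
  "C1 v b \<longleftrightarrow> v mod 3 = 2 \<and>
     (\<exists>l e. assoc_pair v b l e \<and> e \<in> {-2,-1,1,2} \<and>
        (v mod 6 = 5 \<longrightarrow> l mod 3 \<in> {1,2}) \<and>
        (v mod 6 = 2 \<longrightarrow> l mod 6 \<in> {2,4}) \<and>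
        (int b = \<lfloor>real_of_int l * real v * (real v - 1) / 6\<rfloor> \<or>
         int b = \<lceil>real_of_int l * real v * (real v - 1) / 6\<rceil>))"

text \<open>Labelled graphs G_eps on vertex set G_verts eps with edge labels in {-1,0,1}
  (0 = non-edge).\<close>
definition G_verts :: "int \<Rightarrow> nat set" where
  "G_verts e = (if \<bar>e\<bar> = 1 then {0,1,2} else {0,1,2,3})"

definition G_label :: "int \<Rightarrow> nat \<Rightarrow> nat \<Rightarrow> int" where
  "G_label e x y =
     (if \<bar>e\<bar> = 1 then
        sgn e * (if {x,y} = {0,1} \<or> {x,y} = {0,2} then 1
                 else if {x,y} = {1,2} then -1 else 0)
      else
        sgn e * (if {x,y} = {0,1} \<or> {x,y} = {1,2} \<or> {x,y} = {2,3} then 1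
                 else if {x,y} = {3,0} then -1 else 0))"

text \<open>Defect graph of (V,F) w.r.t. lambda l: label of pair xy is lambda_xy - l
  (edges are the pairs with nonzero label). It is isomorphic (as a labelled graph,
  up to isolated vertices) to G_e if some injection of G_verts e into V carries the
  labels of G_e to the defect labels and every defect edge lies in the image.\<close>
definition defect_iso :: "'a set \<Rightarrow> 'a set multiset \<Rightarrow> int \<Rightarrow> int \<Rightarrow> bool" where
  "defect_iso V F l e \<longleftrightarrow> (\<exists>f. inj_on f (G_verts e) \<and> f ` G_verts e \<subseteq> V \<and>
      (\<forall>x\<in>G_verts e. \<forall>y\<in>G_verts e. x \<noteq> y \<longrightarrow>
          int (lam F {f x, f y}) - l = G_label e x y) \<and>
      (\<forall>x\<in>V. \<forall>y\<in>V. x \<noteq> y \<and> int (lam F {x, y}) \<noteq> l \<longrightarrow>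
          x \<in> f ` G_verts e \<and> y \<in> f ` G_verts e))"

definition NWBTS :: "nat \<Rightarrow> nat \<Rightarrow> 'a set \<Rightarrow> 'a set multiset \<Rightarrow> bool" where
  "NWBTS v b V F \<longleftrightarrow> C1 v b \<and> TS v b V F \<and> balanced 3 V F \<and>
     (\<exists>l e. assoc_pair v b l e \<and>
        (\<forall>x\<in>V. \<forall>y\<in>V. x \<noteq> y \<longrightarrow> \<bar>int (lam F {x, y}) - l\<bar> \<le> 1) \<and>
        defect_iso V F l e)"

end

theory Submission
  imports Defs
begin

text \<open>
  Taking every 3-subset of a \<open>v\<close>-set \<open>q\<close> times gives a system in which every pair lies in
  \<open>q(v - 2)\<close> blocks and every triple in \<open>q\<close> blocks. Adding a base system \<open>B\<close>, a set of
  distinct 3-subsets whose pair counts are \<open>\<lambda>\<^sub>0\<close> plus the labels of \<open>G\<^sub>\<epsilon>\<close>, keeps every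
  triple count in \<open>{q, q + 1}\<close> and makes \<open>G\<^sub>\<epsilon>\<close> the defect graph for
  \<open>\<lambda> = q(v - 2) + \<lambda>\<^sub>0\<close>. The complement of \<open>B\<close> among all 3-subsets is a base system for
  \<open>v - 2 - \<lambda>\<^sub>0\<close> and \<open>-\<epsilon>\<close>, so a base system with \<open>r\<close> blocks covers the residues \<open>r\<close> and
  \<open>C(v,3) - r\<close> of \<open>b\<close> modulo \<open>C(v,3)\<close>. It remains to exhibit base systems with 3 and 4 blocks
  for \<open>v = 5\<close>, and with 18, 19, 36, 37, 73 and 74 blocks for \<open>v = 11\<close>; they are checked by
  evaluation.
\<close>

definition complete_design :: "'a set \<Rightarrow> 'a set multiset" where
  "complete_design V = mset_set {B. B \<subseteq> V \<and> card B = 3}"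

lemma finite_3_subsets: "finite V \<Longrightarrow> finite {B. B \<subseteq> V \<and> card B = 3}"
  by (rule finite_subset[of _ "Pow V"]) auto

lemma in_complete_design_iff:
  "finite V \<Longrightarrow> B \<in># complete_design V \<longleftrightarrow> B \<subseteq> V \<and> card B = 3"
  by (simp add: complete_design_def finite_3_subsets)

lemma size_complete_design: "finite V \<Longrightarrow> size (complete_design V) = card V choose 3"
  by (simp add: complete_design_def n_subsets)

lemma lam_add: "lam (M + N) S = lam M S + lam N S"
  by (simp add: lam_def)

lemma lam_repeat_mset: "lam (repeat_mset q M) S = q * lam M S"
  by (induction q) (simp_all add: lam_def)

lemma lam_mono: "N \<subseteq># M \<Longrightarrow> lam N S \<le> lam M S"
  by (simp add: lam_def multiset_filter_mono size_mset_mono)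

lemma lam_diff: "N \<subseteq># M \<Longrightarrow> lam (M - N) S = lam M S - lam N S"
  by (simp add: lam_def size_Diff_submset multiset_filter_mono)

lemma lam_complete_design:
  "finite V \<Longrightarrow> lam (complete_design V) S = card {B. B \<subseteq> V \<and> card B = 3 \<and> S \<subseteq> B}"
  by (simp add: lam_def complete_design_def finite_3_subsets conj_assoc)

lemma lam_complete_design_pair:
  assumes "finite V" "x \<in> V" "y \<in> V" "x \<noteq> y"
  shows "lam (complete_design V) {x, y} = card V - 2"
proof -
  have "{B. B \<subseteq> V \<and> card B = 3 \<and> {x, y} \<subseteq> B} = (\<lambda>z. {x, y, z}) ` (V - {x, y})"
  proof (intro equalityI subsetI)
    fix B assume B: "B \<in> {B. B \<subseteq> V \<and> card B = 3 \<and> {x, y} \<subseteq> B}"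
    then have "card (B - {x, y}) = 1"
      using assms by (simp add: card_Diff_subset)
    then obtain z where z: "B - {x, y} = {z}" by (meson card_1_singletonE)
    then have "B = {x, y, z}" using B by auto
    moreover have "z \<in> V - {x, y}" using z B by auto
    ultimately show "B \<in> (\<lambda>z. {x, y, z}) ` (V - {x, y})" by blast
  qed (use assms in auto)
  moreover have "inj_on (\<lambda>z. {x, y, z}) (V - {x, y})"
    by (rule inj_onI) (auto simp: insert_eq_iff)
  ultimately show ?thesis
    using assms by (simp add: lam_complete_design card_image card_Diff_subset)
qed

lemma lam_complete_design_3_subset:
  assumes "finite V" "T \<subseteq> V" "card T = 3"
  shows "lam (complete_design V) T = 1"
proof -
  have "{B. B \<subseteq> V \<and> card B = 3 \<and> T \<subseteq> B} = {T}"
  proof (intro equalityI subsetI)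
    fix B assume B: "B \<in> {B. B \<subseteq> V \<and> card B = 3 \<and> T \<subseteq> B}"
    then have "T \<subseteq> B" "card B = 3" "finite B" using assms(1) finite_subset by blast+
    then have "T = B" using card_subset_eq assms(3) by metis
    then show "B \<in> {T}" by simp
  qed (use assms in simp)
  then show ?thesis by (simp add: lam_complete_design assms(1))
qed

lemma G_label_uminus: "G_label (- e) x y = - G_label e x y"
  by (simp add: G_label_def)

lemma G_label_commute: "G_label e x y = G_label e y x"
  by (simp add: G_label_def insert_commute)

lemma G_label_abs_le_1: "\<bar>G_label e x y\<bar> \<le> 1"
  by (simp add: G_label_def abs_mult sgn_if)

lemma G_label_nonzero_in_G_verts:
  "e \<noteq> 0 \<Longrightarrow> G_label e x y \<noteq> 0 \<Longrightarrow> x \<in> G_verts e \<and> y \<in> G_verts e"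
  by (auto simp: G_label_def G_verts_def doubleton_eq_iff split: if_splits)

lemma G_verts_uminus: "G_verts (- e) = G_verts e"
  by (simp add: G_verts_def)

definition base_system :: "nat set \<Rightarrow> int \<Rightarrow> int \<Rightarrow> nat set multiset \<Rightarrow> bool" where
  "base_system V l e B \<longleftrightarrow> B \<subseteq># complete_design V \<and>
     (\<forall>x\<in>V. \<forall>y\<in>V. x \<noteq> y \<longrightarrow> int (lam B {x, y}) = l + G_label e x y)"

lemma base_system_complement:
  assumes "finite V" "base_system V l e B"
  shows "base_system V (int (card V - 2) - l) (- e) (complete_design V - B)"
  unfolding base_system_def
proof (intro conjI ballI impI)
  show "complete_design V - B \<subseteq># complete_design V" by simp
next
  fix x y assume xy: "x \<in> V" "y \<in> V" "x \<noteq> y"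
  have sub: "B \<subseteq># complete_design V" using assms(2) by (simp add: base_system_def)
  have le: "lam B {x, y} \<le> card V - 2"
    using lam_mono[OF sub, of "{x, y}"] lam_complete_design_pair[OF assms(1) xy] by simp
  have "int (lam (complete_design V - B) {x, y}) = int (card V - 2) - int (lam B {x, y})"
    unfolding lam_diff[OF sub] lam_complete_design_pair[OF assms(1) xy] by (rule of_nat_diff[OF le])
  moreover have "int (lam B {x, y}) = l + G_label e x y"
    using assms(2) xy by (simp add: base_system_def)
  ultimately show "int (lam (complete_design V - B) {x, y}) =
      int (card V - 2) - l + G_label (- e) x y"
    unfolding G_label_uminus by linarith
qed

lemma defect_iso_identity:
  assumes "G_verts e \<subseteq> V" "e \<noteq> 0"
    and "\<forall>x\<in>V. \<forall>y\<in>V. x \<noteq> y \<longrightarrow> int (lam F {x, y}) - l = G_label e x y"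
  shows "defect_iso V F l e"
  unfolding defect_iso_def
proof (intro exI[of _ id] conjI ballI impI)
  show "inj_on id (G_verts e)" by simp
  show "id ` G_verts e \<subseteq> V" using assms(1) by simp
next
  fix x y assume "x \<in> G_verts e" "y \<in> G_verts e" "x \<noteq> y"
  then show "int (lam F {id x, id y}) - l = G_label e x y"
    using assms(1,3) by (simp add: subset_iff)
next
  fix x y assume "x \<in> V" "y \<in> V" "x \<noteq> y \<and> int (lam F {x, y}) \<noteq> l"
  then have "G_label e x y \<noteq> 0" using assms(3) by force
  then show "x \<in> id ` G_verts e" "y \<in> id ` G_verts e"
    using G_label_nonzero_in_G_verts[OF assms(2)] by auto
qed

text \<open>\<open>(l, e)\<close> is the associated pair of \<open>(v, b)\<close> with the restrictions of (C1); the bound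
  \<open>-v < 2e < v\<close> is omitted as it is automatic for \<open>v \<ge> 5\<close>.\<close>
definition C1_assoc_pair :: "nat \<Rightarrow> nat \<Rightarrow> int \<Rightarrow> int \<Rightarrow> bool" where
  "C1_assoc_pair v b l e \<longleftrightarrow> e \<in> {-2, -1, 1, 2} \<and> l mod 3 \<in> {1, 2} \<and>
     int (3 * b) = l * int (v choose 2) + e"

lemma three_times_choose_3: "3 * (v choose 3) = (v - 2) * (v choose 2)"
  using times_binomial_minus1_eq[of 3 v] binomial_absorb_comp[of v 2] by simp

lemma real_choose_2: "2 * real (v choose 2) = real v * (real v - 1)"
proof -
  have "2 * (v choose 2) = v * (v - 1)"
    using times_binomial_minus1_eq[of 2 v] by simp
  then have "real (2 * (v choose 2)) = real (v * (v - 1))"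
    by (rule arg_cong)
  then show ?thesis
    by (cases v) (simp_all add: algebra_simps)
qed

lemma C1_assoc_pair_add_complete:
  assumes "v mod 3 = 2" "C1_assoc_pair v b l e"
  shows "C1_assoc_pair v (q * (v choose 3) + b) (int (q * (v - 2)) + l) e"
proof -
  have "v - 2 = 3 * (v div 3)" using assms(1) by presburger
  then have "(int (q * (v - 2)) + l) mod 3 = l mod 3"
    by (simp add: mod_add_left_eq[symmetric])
  moreover have "3 * (q * (v choose 3) + b) = q * (v - 2) * (v choose 2) + 3 * b"
    by (simp add: algebra_simps three_times_choose_3)
  then have "int (3 * (q * (v choose 3) + b)) = int (q * (v - 2)) * int (v choose 2) + int (3 * b)"
    by (metis of_nat_add of_nat_mult)
  ultimately show ?thesis
    using assms(2) by (simp add: C1_assoc_pair_def algebra_simps)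
qed

lemma C1_assoc_pair_complement:
  assumes "v mod 3 = 2" "b \<le> v choose 3" "C1_assoc_pair v b l e"
  shows "C1_assoc_pair v ((v choose 3) - b) (int (v - 2) - l) (- e)"
proof -
  have "v - 2 = 3 * (v div 3)" using assms(1) by presburger
  then have "(int (v - 2) - l) mod 3 = (- l) mod 3"
    by (simp add: mod_diff_left_eq[symmetric])
  moreover have "l mod 3 \<in> {1, 2}" "e \<in> {-2, -1, 1, 2}"
    and count: "3 * int b = l * int (v choose 2) + e"
    using assms(3) by (simp_all add: C1_assoc_pair_def)
  ultimately have "(int (v - 2) - l) mod 3 \<in> {1, 2}" "- e \<in> {-2, -1, 1, 2}"
    by (auto simp: zmod_zminus1_eq_if)
  moreover have "3 * int (v choose 3) = int (v - 2) * int (v choose 2)"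
    using three_times_choose_3[of v] by (metis of_nat_mult of_nat_numeral)
  moreover have "int ((v choose 3) - b) = int (v choose 3) - int b"
    using assms(2) by (simp add: of_nat_diff)
  ultimately show ?thesis
    using count unfolding C1_assoc_pair_def by (simp add: algebra_simps)
qed

lemma assoc_pair_rounding:
  assumes "assoc_pair v b l e" "\<bar>e\<bar> < 3"
  shows "int b = \<lfloor>real_of_int l * real v * (real v - 1) / 6\<rfloor> \<or>
         int b = \<lceil>real_of_int l * real v * (real v - 1) / 6\<rceil>"
proof -
  have "real_of_int (int (3 * b)) = real_of_int (l * int (v choose 2) + e)"
    using assms(1) unfolding assoc_pair_def by presburger
  then have "3 * real b = real_of_int l * real (v choose 2) + real_of_int e"
    by simp
  have x: "real_of_int l * real v * (real v - 1) / 6 = real b - real_of_int e / 3"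
  proof -
    have "real_of_int l * real v * (real v - 1) / 6 = real_of_int l * (2 * real (v choose 2)) / 6"
      by (simp only: mult.assoc real_choose_2)
    also have "\<dots> = real b - real_of_int e / 3"
      using \<open>3 * real b = _\<close> by (simp add: field_simps)
    finally show ?thesis .
  qed
  show ?thesis
  proof (cases "e > 0")
    case True
    then have "\<lceil>real b - real_of_int e / 3\<rceil> = int b"
      using assms(2) by (intro ceiling_unique) simp_all
    then show ?thesis by (simp add: x)
  next
    case False
    then have "\<lfloor>real b - real_of_int e / 3\<rfloor> = int b"
      using assms(2) by (intro floor_unique) simp_all
    then show ?thesis by (simp add: x)
  qed
qed

lemma C1_of_C1_assoc_pair:
  assumes "v mod 6 = 5" "C1_assoc_pair v b l e"
  shows "C1 v b" "assoc_pair v b l e"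
proof -
  have "5 \<le> v" using assms(1) by presburger
  moreover have e: "e \<in> {-2, -1, 1, 2}" using assms(2) by (simp add: C1_assoc_pair_def)
  ultimately show ap: "assoc_pair v b l e"
    using assms(2) by (auto simp: C1_assoc_pair_def assoc_pair_def)
  have "\<bar>e\<bar> < 3" using e by auto
  moreover have "v mod 3 = 2" "l mod 3 \<in> {1, 2}"
    using assms by (presburger, simp add: C1_assoc_pair_def)
  ultimately show "C1 v b"
    unfolding C1_def using assms(1) ap e assoc_pair_rounding by fastforce
qed

lemma in_repeat_msetD: "B \<in># repeat_mset q M \<Longrightarrow> B \<in># M"
  by (metis count_repeat_mset count_eq_zero_iff mult_zero_right)

lemma NWBTS_of_base_system:
  assumes "finite V" "G_verts e \<subseteq> V" "card V mod 6 = 5"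
    and "base_system V l e B" "C1_assoc_pair (card V) (size B) l e"
  shows "NWBTS (card V) (q * (card V choose 3) + size B) V
           (repeat_mset q (complete_design V) + B)"
    (is "NWBTS ?v ?b V ?F")
proof -
  let ?l = "int (q * (?v - 2)) + l"
  have "?v mod 3 = 2" "?v \<ge> 3" using assms(3) by presburger+
  then have C: "C1 ?v ?b" and A: "assoc_pair ?v ?b ?l e"
    using C1_of_C1_assoc_pair[OF assms(3) C1_assoc_pair_add_complete] assms(5) by blast+
  have e: "e \<noteq> 0" using assms(5) by (auto simp: C1_assoc_pair_def)
  have sub: "B \<subseteq># complete_design V" using assms(4) by (simp add: base_system_def)
  have "\<forall>B'\<in>#?F. B' \<subseteq> V \<and> card B' = 3"
  proof
    fix B' assume "B' \<in># ?F"
    then have "B' \<in># complete_design V"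
      using in_repeat_msetD mset_subset_eqD[OF sub] by auto
    then show "B' \<subseteq> V \<and> card B' = 3" using in_complete_design_iff[OF assms(1)] by blast
  qed
  then have "TS ?v ?b V ?F"
    using \<open>?v \<ge> 3\<close> assms(1) by (simp add: TS_def size_complete_design)
  moreover have "balanced 3 V ?F"
    unfolding balanced_def
  proof (intro allI impI)
    fix S T assume ST: "S \<subseteq> V \<and> T \<subseteq> V \<and> card S = 3 \<and> card T = 3"
    have "lam B S \<le> 1" "lam B T \<le> 1"
      using lam_mono[OF sub] lam_complete_design_3_subset[OF assms(1)] ST by metis+
    then show "\<bar>int (lam ?F S) - int (lam ?F T)\<bar> \<le> 1"
      using ST by (simp add: lam_add lam_repeat_mset lam_complete_design_3_subset assms(1))
  qed
  moreover have defect: "\<forall>x\<in>V. \<forall>y\<in>V. x \<noteq> y \<longrightarrow> int (lam ?F {x, y}) - ?l = G_label e x y"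
    using assms(4) by (simp add: base_system_def lam_add lam_repeat_mset
        lam_complete_design_pair assms(1))
  moreover have "\<forall>x\<in>V. \<forall>y\<in>V. x \<noteq> y \<longrightarrow> \<bar>int (lam ?F {x, y}) - ?l\<bar> \<le> 1"
    using defect G_label_abs_le_1 by metis
  ultimately show ?thesis
    unfolding NWBTS_def using C A defect_iso_identity[OF assms(2) e defect] by blast
qed

fun triple_set :: "nat \<times> nat \<times> nat \<Rightarrow> nat set" where
  "triple_set (a, b, c) = {a, b, c}"

fun sorted_triple :: "nat \<Rightarrow> nat \<times> nat \<times> nat \<Rightarrow> bool" where
  "sorted_triple v (a, b, c) \<longleftrightarrow> a < b \<and> b < c \<and> c < v"

definition pair_count :: "(nat \<times> nat \<times> nat) list \<Rightarrow> nat \<Rightarrow> nat \<Rightarrow> nat" where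
  "pair_count ts x y = length (filter (\<lambda>t. x \<in> triple_set t \<and> y \<in> triple_set t) ts)"

text \<open>\<open>base_system {0..<v}\<close> in a form that \<open>code_simp\<close> evaluates quickly: bounded quantifiers
  become \<open>list_all\<close>, and only the pairs \<open>x < y\<close> are listed.\<close>
definition base_list :: "nat \<Rightarrow> int \<Rightarrow> int \<Rightarrow> (nat \<times> nat \<times> nat) list \<Rightarrow> bool" where
  "base_list v l e ts \<longleftrightarrow> list_all (sorted_triple v) ts \<and> distinct ts \<and>
     list_all (\<lambda>y. list_all (\<lambda>x. int (pair_count ts x y) = l + G_label e x y) [0..<y]) [0..<v]"

lemma sorted_triple_triple_set:
  "sorted_triple v t \<Longrightarrow> triple_set t \<subseteq> {0..<v} \<and> card (triple_set t) = 3"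
  by (cases t) auto

lemma inj_on_triple_set: "inj_on triple_set {t. sorted_triple v t}"
proof (rule inj_onI)
  fix t u assume "t \<in> {t. sorted_triple v t}" "u \<in> {t. sorted_triple v t}"
    and "triple_set t = triple_set u"
  then show "t = u"
    by (cases t; cases u)
      (auto simp: insert_eq_iff,
        (metis insertCI insertE less_irrefl order_less_trans singletonD)+)
qed

lemma lam_mset_triple_set_pair:
  "lam (mset (map triple_set ts)) {x, y} = pair_count ts x y"
proof -
  have "lam (mset (map triple_set ts)) S = length (filter (\<lambda>t. S \<subseteq> triple_set t) ts)" for S
    by (induction ts) (simp_all add: lam_def)
  then show ?thesis by (simp add: pair_count_def)
qed

lemma pair_count_commute: "pair_count ts x y = pair_count ts y x"
  by (simp add: pair_count_def conj_commute)

lemma base_system_of_base_list: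
  assumes "base_list v l e ts"
  shows "base_system {0..<v} l e (mset (map triple_set ts))"
  unfolding base_system_def
proof (intro conjI ballI impI)
  have sorted: "set ts \<subseteq> {t. sorted_triple v t}" and "distinct ts"
    using assms by (auto simp: base_list_def list_all_iff)
  then have "distinct (map triple_set ts)"
    using inj_on_subset[OF inj_on_triple_set sorted] by (simp add: distinct_map)
  then have "mset (map triple_set ts) = mset_set (triple_set ` set ts)"
    by (metis mset_set_set set_map)
  moreover have "triple_set ` set ts \<subseteq> {B. B \<subseteq> {0..<v} \<and> card B = 3}"
    using sorted sorted_triple_triple_set by blast
  ultimately show "mset (map triple_set ts) \<subseteq># complete_design {0..<v}"
    unfolding complete_design_def
    by (simp add: subset_imp_msubset_mset_set finite_3_subsets)
next
  have counts: "\<forall>y<v. \<forall>x<y. int (pair_count ts x y) = l + G_label e x y"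
    using assms by (simp add: base_list_def list_all_iff)
  fix x y assume "x \<in> {0..<v}" "y \<in> {0..<v}" "x \<noteq> y"
  then consider "x < y" "y < v" | "y < x" "x < v" by fastforce
  then show "int (lam (mset (map triple_set ts)) {x, y}) = l + G_label e x y"
    unfolding lam_mset_triple_set_pair
    by cases (use counts pair_count_commute G_label_commute in metis)+
qed

lemma NWBTS_exists_of_base_system:
  assumes "finite V" "G_verts e \<subseteq> V" "card V mod 6 = 5"
    and "base_system V l e B" "C1_assoc_pair (card V) (size B) l e"
    and "b mod (card V choose 3) \<in> {size B, (card V choose 3) - size B}"
  shows "\<exists>F. NWBTS (card V) b V F"
proof -
  let ?C = "card V choose 3"
  have b: "b = b div ?C * ?C + b mod ?C" by (rule div_mult_mod_eq[symmetric])
  have sub: "B \<subseteq># complete_design V" using assms(4) by (simp add: base_system_def)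
  show ?thesis
  proof (cases "b mod ?C = size B")
    case True
    then have "b = b div ?C * ?C + size B" using b by simp
    then show ?thesis
      using NWBTS_of_base_system[OF assms(1-5), of "b div ?C"] by metis
  next
    case False
    let ?B = "complete_design V - B"
    have size: "size ?B = ?C - size B"
      by (simp add: size_Diff_submset[OF sub] size_complete_design assms(1))
    have le: "size B \<le> ?C"
      using size_mset_mono[OF sub] by (simp add: size_complete_design assms(1))
    have "card V mod 3 = 2" using assms(3) by presburger
    then have C1: "C1_assoc_pair (card V) (size ?B) (int (card V - 2) - l) (- e)"
      unfolding size by (rule C1_assoc_pair_complement[OF _ le assms(5)])
    have G: "G_verts (- e) \<subseteq> V" using assms(2) by (simp add: G_verts_uminus)
    have "b = b div ?C * ?C + size ?B"
      using False assms(6) b size by simp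
    then show ?thesis
      using NWBTS_of_base_system[OF assms(1) G assms(3)
          base_system_complement[OF assms(1,4)] C1, of "b div ?C"] by metis
  qed
qed

lemma NWBTS_exists_of_base_lists:
  assumes "v mod 6 = 5"
    and "\<forall>(l, e, ts) \<in> set bases. base_list v l e ts \<and> C1_assoc_pair v (length ts) l e"
    and "b mod (v choose 3) \<in> (\<Union>(l, e, ts) \<in> set bases. {length ts, (v choose 3) - length ts})"
  shows "\<exists>(V :: nat set) F. NWBTS v b V F"
proof -
  obtain l e ts where base: "base_list v l e ts" "C1_assoc_pair v (length ts) l e"
    and b: "b mod (v choose 3) \<in> {length ts, (v choose 3) - length ts}"
    using assms(2,3) by blast
  have G: "G_verts e \<subseteq> {0..<v}"
    using assms(1) by (auto simp: G_verts_def)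
  have size: "size (mset (map triple_set ts)) = length ts" by simp
  have "\<exists>F. NWBTS (card {0..<v}) b {0..<v} F"
    using NWBTS_exists_of_base_system[OF _ G _ base_system_of_base_list[OF base(1)], unfolded size]
      assms(1) base(2) b by simp
  then show ?thesis by auto
qed

definition bases_5 :: "(int \<times> int \<times> (nat \<times> nat \<times> nat) list) list" where
  "bases_5 =
    [(1, -1, [(0,3,4), (1,2,3), (1,2,4)]),
     (1, 2, [(0,1,2), (0,1,4), (1,2,3), (2,3,4)])]"

definition bases_11 :: "(int \<times> int \<times> (nat \<times> nat \<times> nat) list) list" where
  "bases_11 =
    [(1, -1,
      [(0,3,10), (0,4,6), (0,5,8), (0,7,9), (1,2,7), (1,2,9), (1,3,4), (1,5,6),
       (1,8,10), (2,3,5), (2,4,10), (2,6,8), (3,6,7), (3,8,9), (4,5,9), (4,7,8),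
       (5,7,10), (6,9,10)]),
     (1, 2,
      [(0,1,2), (0,1,6), (0,4,10), (0,5,7), (0,8,9), (1,2,3), (1,4,8), (1,5,9),
       (1,7,10), (2,3,10), (2,4,9), (2,5,6), (2,7,8), (3,4,5), (3,6,8), (3,7,9),
       (4,6,7), (5,8,10), (6,9,10)]),
     (2, -2,
      [(0,1,3), (0,2,5), (0,2,10), (0,3,6), (0,3,9), (0,4,5), (0,4,9), (0,6,8),
       (0,7,8), (0,7,10), (1,2,5), (1,3,10), (1,4,7), (1,4,8), (1,5,9), (1,6,8),
       (1,6,10), (1,7,9), (2,3,4), (2,4,6), (2,6,7), (2,7,9), (2,8,9), (2,8,10),
       (3,4,8), (3,5,7), (3,5,8), (3,6,9), (3,7,10), (4,5,10), (4,6,7), (4,9,10),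
       (5,6,9), (5,6,10), (5,7,8), (8,9,10)]),
     (2, 1,
      [(0,1,2), (0,1,5), (0,1,10), (0,2,7), (0,2,9), (0,3,5), (0,3,8), (0,4,6),
       (0,4,8), (0,6,10), (0,7,9), (1,3,8), (1,3,9), (1,4,7), (1,4,10), (1,5,6),
       (1,6,9), (1,7,8), (2,3,6), (2,3,10), (2,4,6), (2,4,10), (2,5,7), (2,5,8),
       (2,8,9), (3,4,5), (3,4,7), (3,6,7), (3,9,10), (4,5,9), (4,8,9), (5,6,8),
       (5,7,10), (5,9,10), (6,7,9), (6,8,10), (7,8,10)]),
     (4, -1,
      [(0,1,4), (0,1,5), (0,1,9), (0,2,5), (0,2,7), (0,2,8), (0,3,4), (0,3,5),
       (0,3,6), (0,3,8), (0,4,6), (0,4,10), (0,5,9), (0,6,7), (0,6,9), (0,7,8),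
       (0,7,10), (0,8,10), (0,9,10), (1,2,4), (1,2,6), (1,2,7), (1,2,8), (1,2,10),
       (1,3,7), (1,3,8), (1,3,9), (1,3,10), (1,4,5), (1,4,9), (1,5,6), (1,5,10),
       (1,6,8), (1,6,10), (1,7,8), (1,7,9), (2,3,5), (2,3,6), (2,3,7), (2,3,8),
       (2,4,6), (2,4,9), (2,4,10), (2,5,6), (2,5,10), (2,7,9), (2,8,9), (2,9,10),
       (3,4,5), (3,4,7), (3,4,9), (3,5,10), (3,6,8), (3,6,9), (3,7,10), (3,9,10),
       (4,5,7), (4,5,8), (4,6,7), (4,6,10), (4,7,8), (4,8,9), (4,8,10), (5,6,7),
       (5,6,9), (5,7,8), (5,7,9), (5,8,9), (5,8,10), (6,7,10), (6,8,9), (6,8,10),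
       (7,9,10)]),
     (4, 2,
      [(0,1,2), (0,1,5), (0,1,6), (0,1,7), (0,1,8), (0,2,6), (0,2,7), (0,2,8),
       (0,3,4), (0,3,6), (0,3,9), (0,4,5), (0,4,7), (0,4,10), (0,5,7), (0,5,9),
       (0,6,10), (0,8,9), (0,8,10), (0,9,10), (1,2,3), (1,2,4), (1,2,7), (1,2,10),
       (1,3,6), (1,3,8), (1,3,9), (1,4,8), (1,4,9), (1,4,10), (1,5,6), (1,5,7),
       (1,5,9), (1,6,9), (1,7,10), (1,8,10), (2,3,4), (2,3,5), (2,3,9), (2,3,10),
       (2,4,6), (2,4,9), (2,5,6), (2,5,8), (2,5,9), (2,6,10), (2,7,8), (2,7,10),
       (2,8,9), (3,4,5), (3,4,8), (3,5,7), (3,5,10), (3,6,7), (3,6,8), (3,7,9),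
       (3,7,10), (3,8,10), (4,5,6), (4,5,8), (4,6,7), (4,6,10), (4,7,8), (4,7,9),
       (4,9,10), (5,6,8), (5,7,10), (5,8,10), (5,9,10), (6,7,8), (6,7,9), (6,8,9),
       (6,9,10), (7,8,9)])]"

lemma bases_5_valid:
  "\<forall>(l, e, ts) \<in> set bases_5. base_list 5 l e ts \<and> C1_assoc_pair 5 (length ts) l e"
  unfolding bases_5_def base_list_def pair_count_def C1_assoc_pair_def by code_simp

lemma bases_11_valid:
  "\<forall>(l, e, ts) \<in> set bases_11. base_list 11 l e ts \<and> C1_assoc_pair 11 (length ts) l e"
  unfolding bases_11_def base_list_def pair_count_def C1_assoc_pair_def by code_simp

lemma mod_165_of_mod_55:
  fixes b :: nat
  assumes "b mod 55 \<in> {18, 19, 36, 37}"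
  shows "b mod 165 \<in> {18, 19, 36, 37, 73, 74, 91, 92, 128, 129, 146, 147}"
proof -
  define r where "r = b mod 165"
  have r55: "r mod 55 \<in> {18, 19, 36, 37}"
    using assms by (simp add: r_def mod_mod_cancel)
  have "r < 165" by (simp add: r_def)
  then have "r div 55 < 3" by (simp add: div_less_iff_less_mult)
  then consider "r div 55 = 0" | "r div 55 = 1" | "r div 55 = 2" by linarith
  moreover have "r = 55 * (r div 55) + r mod 55"
    using div_mult_mod_eq[of r 55] by linarith
  ultimately have "r \<in> {18, 19, 36, 37, 73, 74, 91, 92, 128, 129, 146, 147}"
    using r55 by cases auto
  then show ?thesis by (simp add: r_def)
qed

theorem lemma4p1:
  shows "(\<forall>b::nat. b mod 10 \<in> {3,4,6,7} \<longrightarrow>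
            (\<exists>(V::nat set) F. NWBTS 5 b V F)) \<and>
         (\<forall>b::nat. b mod 55 \<in> {18,19,36,37} \<longrightarrow>
            (\<exists>(V::nat set) F. NWBTS 11 b V F))"
proof (intro conjI allI impI)
  fix b :: nat assume "b mod 10 \<in> {3, 4, 6, 7}"
  moreover have "(5 :: nat) choose 3 = 10" by (simp add: numeral_eq_Suc)
  ultimately show "\<exists>(V::nat set) F. NWBTS 5 b V F"
    by (intro NWBTS_exists_of_base_lists[OF _ bases_5_valid]) (auto simp: bases_5_def)
next
  fix b :: nat assume "b mod 55 \<in> {18, 19, 36, 37}"
  then have "b mod 165 \<in> {18, 19, 36, 37, 73, 74, 91, 92, 128, 129, 146, 147}"
    by (rule mod_165_of_mod_55)
  moreover have "(11 :: nat) choose 3 = 165" by (simp add: numeral_eq_Suc)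
  ultimately show "\<exists>(V::nat set) F. NWBTS 11 b V F"
    by (intro NWBTS_exists_of_base_lists[OF _ bases_11_valid]) (auto simp: bases_11_def)
qed

end
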